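(* For $n\ge1$, $$\left|\Pi_n\wr C_2(1^11^1,1^11^2,1^22^1)\right|=\left|\Pi_n\wr C_2(1^11^2,1^12^1,1^12^2)\right|=\left|\Pi_n\wr C_2(1^11^2,1^12^1,1^22^1)\right|=2n.$$
   Context: For $n\ge0$ let $[n]=\{1,\dots,n\}$. A $2$-colored set partition of $[n]$ is a set partition of $[n]$ together with an assignment of a color from $\{1,2\}$ to each element; $\Pi_n\wr C_2$ is the set of these. For a set $S$ of patterns, $\Pi_n\wr C_2(S)$ is the set of such colored partitions avoiding every pattern in $S$ in the pattern sense. For the patterns used here: $\sigma$ contains $1^11^1$ iff two elements in the same block have the same color; $1^11^2$ iff there are $i<j$ in the same block with $i$ colored $1$ and $j$ colored $2$; $1^12^1$ iff two elements in different blocks have the same color; $1^12^2$ iff there are $i<j$ in different blocks with $i$ colored $1$ and $j$ colored $2$; $1^22^1$ iff there are $i<j$ in different blocks with $i$ colored $2$ and $j$ colored $1$. *)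

theory Defs
  imports "HOL-Library.Disjoint_Sets" "HOL-Library.FuncSet"
begin

type_synonym colored_partition = "nat set set \<times> (nat \<Rightarrow> nat)"

definition colored_partitions :: "nat \<Rightarrow> colored_partition set" where
  "colored_partitions n = {(P, c). partition_on {1..n} P \<and> c \<in> {1..n} \<rightarrow>\<^sub>E {1, 2}}"

definition same_block :: "nat set set \<Rightarrow> nat \<Rightarrow> nat \<Rightarrow> bool" where
  "same_block P i j \<longleftrightarrow> (\<exists>B\<in>P. i \<in> B \<and> j \<in> B)"

datatype pattern = P1a1a | P1a1b | P1a2a | P1a2b | P1b2a
  \<comment> \<open>1^1 1^1, 1^1 1^2, 1^1 2^1, 1^1 2^2, 1^2 2^1\<close>

fun contains :: "nat \<Rightarrow> colored_partition \<Rightarrow> pattern \<Rightarrow> bool" where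
  "contains n (P, c) P1a1a \<longleftrightarrow>
     (\<exists>i\<in>{1..n}. \<exists>j\<in>{1..n}. i < j \<and> same_block P i j \<and> c i = c j)"
| "contains n (P, c) P1a1b \<longleftrightarrow>
     (\<exists>i\<in>{1..n}. \<exists>j\<in>{1..n}. i < j \<and> same_block P i j \<and> c i = 1 \<and> c j = 2)"
| "contains n (P, c) P1a2a \<longleftrightarrow>
     (\<exists>i\<in>{1..n}. \<exists>j\<in>{1..n}. i < j \<and> \<not> same_block P i j \<and> c i = c j)"
| "contains n (P, c) P1a2b \<longleftrightarrow>
     (\<exists>i\<in>{1..n}. \<exists>j\<in>{1..n}. i < j \<and> \<not> same_block P i j \<and> c i = 1 \<and> c j = 2)"
| "contains n (P, c) P1b2a \<longleftrightarrow>
     (\<exists>i\<in>{1..n}. \<exists>j\<in>{1..n}. i < j \<and> \<not> same_block P i j \<and> c i = 2 \<and> c j = 1)"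

definition avoiding :: "nat \<Rightarrow> pattern set \<Rightarrow> colored_partition set" where
  "avoiding n S = {\<sigma> \<in> colored_partitions n. \<forall>p\<in>S. \<not> contains n \<sigma> p}"

end

theory Submission
  imports Defs
begin

(* Read a coloring of [n] as a word in {1, 2}^n.  For the first class, the patterns say that
   i < j share a block exactly when c i = 2 and c j = 1.  Transitivity of "same block" then
   leaves two possibilities: the word is 1^k 2^(n-k) and all blocks are singletons (n + 1
   choices of k), or the word has a single inversion, which must be adjacent, and that pair is
   the only non-singleton block (n - 1 positions).  In the other two classes 1^1 2^1 forces
   equally colored elements into one block, so with two colors the partition is either a
   single block or the two color classes.  In each case the remaining pattern makes the word
   monotone: 2^k 1^(n-k) for a single block (n + 1 choices), and 2^k 1^(n-k), resp.
   1^k 2^(n-k), with both colors present for the two classes (n - 1 choices). *)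

lemma same_block_sym: "same_block P x y \<Longrightarrow> same_block P y x"
  unfolding same_block_def by blast

lemma same_block_commute: "same_block P x y \<longleftrightarrow> same_block P y x"
  unfolding same_block_def by blast

lemma same_block_refl: "partition_on A P \<Longrightarrow> x \<in> A \<Longrightarrow> same_block P x x"
  unfolding same_block_def partition_on_def by blast

lemma same_block_trans:
  assumes "partition_on A P" "same_block P x y" "same_block P y z"
  shows "same_block P x z"
  using assms unfolding same_block_def partition_on_def disjoint_def by blast

lemma same_block_imp_mem: "partition_on A P \<Longrightarrow> same_block P x y \<Longrightarrow> x \<in> A \<and> y \<in> A"
  unfolding same_block_def partition_on_def by blast

lemma partition_on_eqI:
  assumes P: "partition_on A P" and Q: "partition_on A Q"
    and same: "\<And>x y. x \<in> A \<Longrightarrow> y \<in> A \<Longrightarrow> same_block P x y \<longleftrightarrow> same_block Q x y"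
  shows "P = Q"
proof -
  have "same_block P x y \<longleftrightarrow> same_block Q x y" for x y
    using same[of x y] same_block_imp_mem[OF P, of x y] same_block_imp_mem[OF Q, of x y] by blast
  then have same_rel: "{(x, y). \<exists>p\<in>P. x \<in> p \<and> y \<in> p} = {(x, y). \<exists>p\<in>Q. x \<in> p \<and> y \<in> p}"
    unfolding same_block_def by simp
  have "P = A // {(x, y). \<exists>p\<in>P. x \<in> p \<and> y \<in> p}"
    by (rule partition_on_eq_quotient[OF P, symmetric])
  also have "\<dots> = Q"
    unfolding same_rel by (rule partition_on_eq_quotient[OF Q])
  finally show ?thesis .
qed

lemma partition_on_eqI_less:
  fixes A :: "nat set"
  assumes P: "partition_on A P" and Q: "partition_on A Q"
    and less: "\<And>x y. x \<in> A \<Longrightarrow> y \<in> A \<Longrightarrow> x < y \<Longrightarrow> same_block P x y \<longleftrightarrow> same_block Q x y"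
  shows "P = Q"
proof (rule partition_on_eqI[OF P Q])
  fix x y assume xy: "x \<in> A" "y \<in> A"
  consider "x < y" | "x = y" | "y < x" by linarith
  then show "same_block P x y \<longleftrightarrow> same_block Q x y"
  proof cases
    case 1
    then show ?thesis using less xy by blast
  next
    case 2
    then show ?thesis using same_block_refl[OF P xy(1)] same_block_refl[OF Q xy(1)] by simp
  next
    case 3
    then show ?thesis
      using less[OF xy(2,1)] same_block_commute[of P x y] same_block_commute[of Q x y] by simp
  qed
qed

lemma same_block_space: "same_block {A} x y \<longleftrightarrow> x \<in> A \<and> y \<in> A"
  unfolding same_block_def by simp

lemma same_block_singletons: "same_block ((\<lambda>x. {x}) ` A) x y \<longleftrightarrow> x \<in> A \<and> x = y"
  unfolding same_block_def by auto

definition fiber_partition :: "'a set \<Rightarrow> ('a \<Rightarrow> 'b) \<Rightarrow> 'a set set" where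
  "fiber_partition A f = (\<lambda>x. {y \<in> A. f y = f x}) ` A"

lemma partition_on_fiber_partition: "partition_on A (fiber_partition A f)"
proof (rule partition_onI)
  show "\<Union> (fiber_partition A f) = A" "{} \<notin> fiber_partition A f"
    unfolding fiber_partition_def by auto
  fix p q assume "p \<in> fiber_partition A f" "q \<in> fiber_partition A f" "p \<noteq> q"
  then obtain x z where "p = {y \<in> A. f y = f x}" "q = {y \<in> A. f y = f z}"
    unfolding fiber_partition_def by blast
  with \<open>p \<noteq> q\<close> show "disjnt p q"
    unfolding disjnt_def by auto
qed

lemma same_block_fiber_partition:
  "same_block (fiber_partition A f) x y \<longleftrightarrow> x \<in> A \<and> y \<in> A \<and> f x = f y"
  unfolding same_block_def fiber_partition_def by auto

lemma fiber_partition_cong: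
  "(\<And>x. x \<in> A \<Longrightarrow> f x = g x) \<Longrightarrow> fiber_partition A f = fiber_partition A g"
  unfolding fiber_partition_def by (rule image_cong) auto

lemma same_block_if_bichromatic_block:
  assumes P: "partition_on A P" and c: "c \<in> A \<rightarrow> {a, b}"
    and same: "\<And>x y. x \<in> A \<Longrightarrow> y \<in> A \<Longrightarrow> c x = c y \<Longrightarrow> same_block P x y"
    and uv: "u \<in> A" "v \<in> A" "same_block P u v" "c u \<noteq> c v"
    and "w \<in> A"
  shows "same_block P w u"
proof -
  have "c w \<in> {a, b}" "c u \<in> {a, b}" "c v \<in> {a, b}"
    using c uv \<open>w \<in> A\<close> by auto
  then consider "c w = c u" | "c w = c v"
    using uv(4) by auto
  then show ?thesis
  proof cases
    case 1
    then show ?thesis using same uv(1) \<open>w \<in> A\<close> by blast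
  next
    case 2
    then have "same_block P w v" using same uv(2) \<open>w \<in> A\<close> by blast
    then show ?thesis using same_block_trans[OF P _ same_block_sym[OF uv(3)]] by blast
  qed
qed

lemma partition_on_two_colors_cases:
  assumes P: "partition_on A P" and "A \<noteq> {}" and c: "c \<in> A \<rightarrow> {a, b}"
    and same: "\<And>x y. x \<in> A \<Longrightarrow> y \<in> A \<Longrightarrow> c x = c y \<Longrightarrow> same_block P x y"
  obtains "P = {A}"
    | x y where "x \<in> A" "y \<in> A" "c x \<noteq> c y" "P = fiber_partition A c"
proof (cases "\<forall>x\<in>A. \<forall>y\<in>A. same_block P x y")
  case True
  have "P = {A}"
    by (rule partition_on_eqI[OF P partition_on_space[OF \<open>A \<noteq> {}\<close>]])
      (use True in \<open>auto simp: same_block_space\<close>)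
  then show ?thesis by (rule that(1))
next
  case False
  then obtain x y where xy: "x \<in> A" "y \<in> A" "\<not> same_block P x y"
    by blast
  have "same_block P u v \<longleftrightarrow> c u = c v" if uv: "u \<in> A" "v \<in> A" for u v
  proof
    assume "same_block P u v"
    show "c u = c v"
    proof (rule ccontr)
      assume "c u \<noteq> c v"
      have to_u: "same_block P w u" if "w \<in> A" for w
        by (rule same_block_if_bichromatic_block[OF P c _ uv \<open>same_block P u v\<close> \<open>c u \<noteq> c v\<close> that])
          (fact same)
      show False
        using same_block_trans[OF P to_u[OF xy(1)] same_block_sym[OF to_u[OF xy(2)]]] xy(3) by blast
    qed
  qed (use same uv in blast)
  then have "P = fiber_partition A c"
    by (intro partition_on_eqI[OF P partition_on_fiber_partition]) (simp add: same_block_fiber_partition)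
  moreover have "c x \<noteq> c y"
    using same xy by blast
  ultimately show ?thesis
    using that(2) xy by blast
qed

lemma PiE_eq_restrictI: "c \<in> A \<rightarrow>\<^sub>E B \<Longrightarrow> (\<And>x. x \<in> A \<Longrightarrow> c x = f x) \<Longrightarrow> c = restrict f A"
  by (metis PiE_restrict restrict_ext)

definition threshold_coloring :: "nat \<Rightarrow> 'a \<Rightarrow> 'a \<Rightarrow> nat \<Rightarrow> 'a" where
  "threshold_coloring k a b x = (if x \<le> k then a else b)"

lemma ex_threshold_coloring:
  assumes c: "c \<in> {1..n} \<rightarrow> {a, b}"
    and no_inversion: "\<And>i j. i \<in> {1..n} \<Longrightarrow> j \<in> {1..n} \<Longrightarrow> i < j \<Longrightarrow> c i = b \<Longrightarrow> c j \<noteq> a"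
  obtains k where "k \<le> n" "\<And>x. x \<in> {1..n} \<Longrightarrow> c x = threshold_coloring k a b x"
proof
  define K where "K = insert 0 {x \<in> {1..n}. c x = a}"
  define k where "k = Max K"
  have "finite K"
    unfolding K_def by simp
  have k_in: "k \<in> K"
    unfolding k_def using \<open>finite K\<close> by (rule Max_in) (simp add: K_def)
  have k_max: "x \<le> k" if "x \<in> K" for x
    unfolding k_def using \<open>finite K\<close> that by (rule Max_ge)
  show "k \<le> n"
    using k_in unfolding K_def by auto
  fix x assume x: "x \<in> {1..n}"
  have "c x \<in> {a, b}"
    using c x by auto
  show "c x = threshold_coloring k a b x"
  proof (cases "x \<le> k")
    case True
    then have "k \<noteq> 0"
      using x by auto
    then have "k \<in> {1..n}" "c k = a"
      using k_in unfolding K_def by auto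
    have "c x = a"
    proof (cases "x = k")
      case False
      then have "c x \<noteq> b"
        using no_inversion[of x k] x True \<open>k \<in> {1..n}\<close> \<open>c k = a\<close> by auto
      then show ?thesis
        using \<open>c x \<in> {a, b}\<close> by auto
    qed (use \<open>c k = a\<close> in simp)
    then show ?thesis
      using True unfolding threshold_coloring_def by simp
  next
    case False
    then have "c x \<noteq> a"
      using k_max[of x] x unfolding K_def by auto
    then show ?thesis
      using False \<open>c x \<in> {a, b}\<close> unfolding threshold_coloring_def by auto
  qed
qed

lemma threshold_coloring_nonconstant:
  assumes "a \<noteq> b" "x \<in> {1..n}" "y \<in> {1..n}"
    and "threshold_coloring k a b x \<noteq> threshold_coloring k a b y"
  shows "k \<in> {1..n-1}"
  using assms unfolding threshold_coloring_def by (auto split: if_splits)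

lemma inj_on_threshold_coloring:
  assumes "a \<noteq> b" "I \<subseteq> {0..n}"
  shows "inj_on (\<lambda>k. (X k, restrict (threshold_coloring k a b) {1..n})) I"
proof (rule linorder_inj_onI')
  fix k l assume "k \<in> I" "l \<in> I" "k < l"
  then have "restrict (threshold_coloring k a b) {1..n} l \<noteq> restrict (threshold_coloring l a b) {1..n} l"
    using assms by (auto simp: threshold_coloring_def)
  then show "(X k, restrict (threshold_coloring k a b) {1..n}) \<noteq> (X l, restrict (threshold_coloring l a b) {1..n})"
    by (metis snd_conv)
qed

(* The color word 1...1 2 1 2...2 with the 2 at position i; its only inversion is (i, i + 1). *)

definition adjacent_descent_coloring :: "nat \<Rightarrow> nat \<Rightarrow> nat" where
  "adjacent_descent_coloring i x = (if x < i \<or> x = Suc i then 1 else 2)"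

definition blocks_are_inversions :: "nat \<Rightarrow> nat set set \<Rightarrow> (nat \<Rightarrow> nat) \<Rightarrow> bool" where
  "blocks_are_inversions n P c \<longleftrightarrow>
     (\<forall>x\<in>{1..n}. \<forall>y\<in>{1..n}. x < y \<longrightarrow> (same_block P x y \<longleftrightarrow> c x = 2 \<and> c y = 1))"

lemma inversion_block_colors:
  assumes P: "partition_on {1..n} P" and c: "c \<in> {1..n} \<rightarrow> {1, 2 :: nat}"
    and inv: "blocks_are_inversions n P c"
    and ij: "i \<in> {1..n}" "j \<in> {1..n}" "i < j" "c i = 2" "c j = 1"
    and m: "m \<in> {1..n}"
  shows "c m = 1 \<Longrightarrow> m = j \<or> m < i" and "c m = 2 \<Longrightarrow> m = i \<or> j < m"
proof -
  have same_iff: "same_block P x y \<longleftrightarrow> c x = 2 \<and> c y = 1"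
    if "x \<in> {1..n}" "y \<in> {1..n}" "x < y" for x y
    using inv that unfolding blocks_are_inversions_def by blast
  have "same_block P i j"
    using same_iff ij by blast
  have same_color_eq: "x = y" if "x \<in> {1..n}" "y \<in> {1..n}" "same_block P x y" "c x = c y" for x y
  proof (rule ccontr)
    assume "x \<noteq> y"
    then consider "x < y" | "y < x" by linarith
    then show False
      using same_iff[of x y] same_iff[of y x] that same_block_commute[of P x y] by cases auto
  qed
  show "m = j \<or> m < i" if "c m = 1"
  proof (rule ccontr)
    assume "\<not> (m = j \<or> m < i)"
    moreover have "m \<noteq> i"
      using that ij by auto
    ultimately have "i < m" "m \<noteq> j"
      by auto
    then have "same_block P m j"
      using same_iff[of i m] m that ij same_block_trans[OF P _ \<open>same_block P i j\<close>] same_block_sym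
      by blast
    then show False
      using same_color_eq[of m j] m that ij \<open>m \<noteq> j\<close> by simp
  qed
  show "m = i \<or> j < m" if "c m = 2"
  proof (rule ccontr)
    assume "\<not> (m = i \<or> j < m)"
    moreover have "m \<noteq> j"
      using that ij by auto
    ultimately have "m < j" "m \<noteq> i"
      by auto
    then have "same_block P m i"
      using same_iff[of m j] m that ij same_block_trans[OF P _ same_block_sym[OF \<open>same_block P i j\<close>]]
      by blast
    then show False
      using same_color_eq[of m i] m that ij \<open>m \<noteq> i\<close> by simp
  qed
qed

lemma single_adjacent_descent:
  assumes P: "partition_on {1..n} P" and c: "c \<in> {1..n} \<rightarrow> {1, 2 :: nat}"
    and inv: "blocks_are_inversions n P c"
    and ij: "i \<in> {1..n}" "j \<in> {1..n}" "i < j" "c i = 2" "c j = 1"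
  shows "j = Suc i" and "\<And>x. x \<in> {1..n} \<Longrightarrow> c x = adjacent_descent_coloring i x"
proof -
  note colors = inversion_block_colors[OF P c inv ij]
  have two_colors: "c m = 1 \<or> c m = 2" if "m \<in> {1..n}" for m
    using c that by auto
  show "j = Suc i"
  proof (rule ccontr)
    assume "j \<noteq> Suc i"
    then have "Suc i \<in> {1..n}" "Suc i < j"
      using ij by auto
    then show False
      using two_colors[of "Suc i"] colors(1)[of "Suc i"] colors(2)[of "Suc i"] by auto
  qed
  then show "c x = adjacent_descent_coloring i x" if "x \<in> {1..n}" for x
    using two_colors[OF that] colors[OF that] ij
    unfolding adjacent_descent_coloring_def by auto
qed

lemma inj_on_adjacent_descent_coloring:
  "inj_on (\<lambda>i. (X i, restrict (adjacent_descent_coloring i) {1..n})) {1..n-1}"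
proof (rule linorder_inj_onI')
  fix i l assume "i \<in> {1..n-1}" "l \<in> {1..n-1}" "i < l"
  then have "restrict (adjacent_descent_coloring i) {1..n} i \<noteq> restrict (adjacent_descent_coloring l) {1..n} i"
    by (simp add: adjacent_descent_coloring_def)
  then show "(X i, restrict (adjacent_descent_coloring i) {1..n}) \<noteq> (X l, restrict (adjacent_descent_coloring l) {1..n})"
    by (metis snd_conv)
qed

lemma threshold_coloring_ne_adjacent_descent_coloring:
  assumes "i \<in> {1..n-1}"
  shows "restrict (threshold_coloring k 1 2) {1..n} \<noteq> restrict (adjacent_descent_coloring i) {1..n}"
proof
  assume eq: "restrict (threshold_coloring k 1 2) {1..n} = restrict (adjacent_descent_coloring i) {1..n}"
  have "i \<in> {1..n}" "Suc i \<in> {1..n}"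
    using assms by auto
  then have "threshold_coloring k 1 2 i = adjacent_descent_coloring i i"
    "threshold_coloring k 1 2 (Suc i) = adjacent_descent_coloring i (Suc i)"
    using fun_cong[OF eq, of i] fun_cong[OF eq, of "Suc i"] by simp_all
  then show False
    unfolding threshold_coloring_def adjacent_descent_coloring_def by (auto split: if_splits)
qed

lemma avoidingD:
  assumes "(P, c) \<in> avoiding n S"
  shows "partition_on {1..n} P" "c \<in> {1..n} \<rightarrow>\<^sub>E {1, 2}" "p \<in> S \<Longrightarrow> \<not> contains n (P, c) p"
  using assms by (auto simp: avoiding_def colored_partitions_def)

lemma restrict_in_avoidingI:
  assumes "partition_on {1..n} P" "f \<in> {1..n} \<rightarrow> {1, 2}"
    "\<And>p. p \<in> S \<Longrightarrow> \<not> contains n (P, restrict f {1..n}) p"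
  shows "(P, restrict f {1..n}) \<in> avoiding n S"
  using assms by (auto simp: avoiding_def colored_partitions_def restrict_PiE_iff)

lemma same_block_if_same_color:
  assumes \<sigma>: "(P, c) \<in> avoiding n S" and "P1a2a \<in> S"
    and xy: "x \<in> {1..n}" "y \<in> {1..n}" "c x = c y"
  shows "same_block P x y"
proof -
  have P: "partition_on {1..n} P"
    by (rule avoidingD(1)[OF \<sigma>])
  have ordered: "same_block P i j" if "i \<in> {1..n}" "j \<in> {1..n}" "i < j" "c i = c j" for i j
    using avoidingD(3)[OF \<sigma> \<open>P1a2a \<in> S\<close>] that unfolding contains.simps by blast
  consider "x < y" | "x = y" | "y < x" by linarith
  then show ?thesis
  proof cases
    case 1
    then show ?thesis using ordered xy by blast
  next
    case 2
    then show ?thesis using same_block_refl[OF P xy(1)] by simp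
  next
    case 3
    then show ?thesis using ordered[of y x] xy same_block_commute[of P x y] by simp
  qed
qed

lemma avoiding_P1a1a_P1a1b_P1b2a_blocks_are_inversions:
  assumes \<sigma>: "(P, c) \<in> avoiding n {P1a1a, P1a1b, P1b2a}"
  shows "blocks_are_inversions n P c"
  unfolding blocks_are_inversions_def
proof (intro ballI impI)
  fix x y assume xy: "x \<in> {1..n}" "y \<in> {1..n}" "x < y"
  have "\<not> contains n (P, c) P1a1a" "\<not> contains n (P, c) P1a1b" "\<not> contains n (P, c) P1b2a"
    using avoidingD(3)[OF \<sigma>] by blast+
  then have "\<not> (same_block P x y \<and> c x = c y)" "\<not> (same_block P x y \<and> c x = 1 \<and> c y = 2)"
    "\<not> (\<not> same_block P x y \<and> c x = 2 \<and> c y = 1)"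
    unfolding contains.simps using xy by blast+
  moreover have "c x \<in> {1, 2}" "c y \<in> {1, 2}"
    using avoidingD(2)[OF \<sigma>] xy by (auto simp: PiE_iff)
  ultimately show "same_block P x y \<longleftrightarrow> c x = 2 \<and> c y = 1"
    by auto
qed

lemma avoiding_P1a1a_P1a1b_P1b2aE:
  assumes \<sigma>: "(P, c) \<in> avoiding n {P1a1a, P1a1b, P1b2a}"
  obtains k where "k \<le> n" "P = (\<lambda>x. {x}) ` {1..n}" "c = restrict (threshold_coloring k 1 2) {1..n}"
    | i where "i \<in> {1..n-1}" "P = fiber_partition {1..n} (\<lambda>x. if x = Suc i then i else x)"
        "c = restrict (adjacent_descent_coloring i) {1..n}"
proof -
  have P: "partition_on {1..n} P" and c_ext: "c \<in> {1..n} \<rightarrow>\<^sub>E {1, 2}"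
    using avoidingD[OF \<sigma>] by auto
  then have c: "c \<in> {1..n} \<rightarrow> {1, 2}"
    by (simp add: PiE_iff)
  have inv: "blocks_are_inversions n P c"
    using \<sigma> by (rule avoiding_P1a1a_P1a1b_P1b2a_blocks_are_inversions)
  show ?thesis
  proof (cases "\<exists>i\<in>{1..n}. \<exists>j\<in>{1..n}. i < j \<and> c i = 2 \<and> c j = 1")
    case True
    then obtain i j where ij: "i \<in> {1..n}" "j \<in> {1..n}" "i < j" "c i = 2" "c j = 1"
      by blast
    note descent = single_adjacent_descent[OF P c inv ij]
    have "P = fiber_partition {1..n} (\<lambda>x. if x = Suc i then i else x)"
      by (rule partition_on_eqI_less[OF P partition_on_fiber_partition])
        (use inv descent(2) in \<open>auto simp: blocks_are_inversions_def same_block_fiber_partition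
          adjacent_descent_coloring_def\<close>)
    moreover have "i \<in> {1..n-1}"
      using ij descent(1) by auto
    ultimately show ?thesis
      using that(2) PiE_eq_restrictI[OF c_ext descent(2)] by blast
  next
    case False
    then obtain k where "k \<le> n" and c_eq: "\<And>x. x \<in> {1..n} \<Longrightarrow> c x = threshold_coloring k 1 2 x"
      using ex_threshold_coloring[OF c] by metis
    have "P = (\<lambda>x. {x}) ` {1..n}"
      by (rule partition_on_eqI_less[OF P partition_on_singletons])
        (use inv False in \<open>auto simp: blocks_are_inversions_def same_block_singletons\<close>)
    then show ?thesis
      using that(1) \<open>k \<le> n\<close> PiE_eq_restrictI[OF c_ext c_eq] by blast
  qed
qed

lemma avoiding_P1a1a_P1a1b_P1b2a:
  "avoiding n {P1a1a, P1a1b, P1b2a} =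
     (\<lambda>k. ((\<lambda>x. {x}) ` {1..n}, restrict (threshold_coloring k 1 2) {1..n})) ` {0..n} \<union>
     (\<lambda>i. (fiber_partition {1..n} (\<lambda>x. if x = Suc i then i else x),
           restrict (adjacent_descent_coloring i) {1..n})) ` {1..n-1}"
  (is "_ = ?F ` _ \<union> ?G ` _")
proof
  show "avoiding n {P1a1a, P1a1b, P1b2a} \<subseteq> ?F ` {0..n} \<union> ?G ` {1..n-1}"
  proof (rule subrelI)
    fix P c assume "(P, c) \<in> avoiding n {P1a1a, P1a1b, P1b2a}"
    then show "(P, c) \<in> ?F ` {0..n} \<union> ?G ` {1..n-1}"
      by (rule avoiding_P1a1a_P1a1b_P1b2aE) auto
  qed
  show "?F ` {0..n} \<union> ?G ` {1..n-1} \<subseteq> avoiding n {P1a1a, P1a1b, P1b2a}"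
  proof (intro Un_least image_subsetI)
    fix k
    show "?F k \<in> avoiding n {P1a1a, P1a1b, P1b2a}"
      by (intro restrict_in_avoidingI partition_on_singletons)
        (auto simp: same_block_singletons threshold_coloring_def split: if_splits)
  next
    fix i
    show "?G i \<in> avoiding n {P1a1a, P1a1b, P1b2a}"
      by (intro restrict_in_avoidingI partition_on_fiber_partition)
        (auto simp: same_block_fiber_partition adjacent_descent_coloring_def split: if_splits)
  qed
qed

lemma avoiding_P1a1b_P1a2a_P1a2bE:
  assumes \<sigma>: "(P, c) \<in> avoiding n {P1a1b, P1a2a, P1a2b}" and "n \<ge> 1"
  obtains k where "k \<le> n" "P = {{1..n}}" "c = restrict (threshold_coloring k 2 1) {1..n}"
    | k where "k \<in> {1..n-1}" "P = fiber_partition {1..n} (threshold_coloring k (2::nat) 1)"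
        "c = restrict (threshold_coloring k 2 1) {1..n}"
proof -
  have P: "partition_on {1..n} P" and c_ext: "c \<in> {1..n} \<rightarrow>\<^sub>E {1, 2}"
    using avoidingD[OF \<sigma>] by auto
  then have c: "c \<in> {1..n} \<rightarrow> {2, 1}"
    by (auto simp: PiE_iff)
  have no_12: "c j \<noteq> 2" if "i \<in> {1..n}" "j \<in> {1..n}" "i < j" "c i = 1" for i j
  proof -
    have "\<not> contains n (P, c) P1a1b" "\<not> contains n (P, c) P1a2b"
      using avoidingD(3)[OF \<sigma>] by blast+
    then show ?thesis
      unfolding contains.simps using that by blast
  qed
  obtain k where "k \<le> n" and c_eq: "\<And>x. x \<in> {1..n} \<Longrightarrow> c x = threshold_coloring k 2 1 x"
    using ex_threshold_coloring[OF c] no_12 by metis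
  note c_restrict = PiE_eq_restrictI[OF c_ext c_eq]
  show ?thesis
  proof (rule partition_on_two_colors_cases[OF P _ c])
    show "{1..n} \<noteq> {}"
      using \<open>n \<ge> 1\<close> by simp
  next
    fix x y assume "x \<in> {1..n}" "y \<in> {1..n}" "c x = c y"
    then show "same_block P x y"
      by (rule same_block_if_same_color[OF \<sigma>, rotated]) simp
  next
    assume "P = {{1..n}}"
    then show ?thesis using that(1) \<open>k \<le> n\<close> c_restrict by blast
  next
    fix x y assume xy: "x \<in> {1..n}" "y \<in> {1..n}" "c x \<noteq> c y" "P = fiber_partition {1..n} c"
    have "k \<in> {1..n-1}"
      by (rule threshold_coloring_nonconstant[of "2::nat" 1 x n y]) (use xy(1-3) c_eq in auto)
    moreover have "P = fiber_partition {1..n} (threshold_coloring k (2::nat) 1)"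
      unfolding xy(4) using c_eq by (rule fiber_partition_cong)
    ultimately show ?thesis
      using that(2) c_restrict by blast
  qed
qed

lemma avoiding_P1a1b_P1a2a_P1a2b:
  assumes "n \<ge> 1"
  shows "avoiding n {P1a1b, P1a2a, P1a2b} =
     (\<lambda>k. ({{1..n}}, restrict (threshold_coloring k 2 1) {1..n})) ` {0..n} \<union>
     (\<lambda>k. (fiber_partition {1..n} (threshold_coloring k (2::nat) 1),
           restrict (threshold_coloring k 2 1) {1..n})) ` {1..n-1}"
  (is "_ = ?F ` _ \<union> ?G ` _")
proof
  show "avoiding n {P1a1b, P1a2a, P1a2b} \<subseteq> ?F ` {0..n} \<union> ?G ` {1..n-1}"
  proof (rule subrelI)
    fix P c assume "(P, c) \<in> avoiding n {P1a1b, P1a2a, P1a2b}"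
    then show "(P, c) \<in> ?F ` {0..n} \<union> ?G ` {1..n-1}"
      by (rule avoiding_P1a1b_P1a2a_P1a2bE[OF _ assms]) auto
  qed
  show "?F ` {0..n} \<union> ?G ` {1..n-1} \<subseteq> avoiding n {P1a1b, P1a2a, P1a2b}"
  proof (intro Un_least image_subsetI)
    fix k
    show "?F k \<in> avoiding n {P1a1b, P1a2a, P1a2b}"
      by (intro restrict_in_avoidingI partition_on_space)
        (use assms in \<open>auto simp: same_block_space threshold_coloring_def split: if_splits\<close>)
  next
    fix k
    show "?G k \<in> avoiding n {P1a1b, P1a2a, P1a2b}"
      by (intro restrict_in_avoidingI partition_on_fiber_partition)
        (auto simp: same_block_fiber_partition threshold_coloring_def split: if_splits)
  qed
qed


lemma avoiding_P1a1b_P1a2a_P1b2aE: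
  assumes \<sigma>: "(P, c) \<in> avoiding n {P1a1b, P1a2a, P1b2a}" and "n \<ge> 1"
  obtains k where "k \<le> n" "P = {{1..n}}" "c = restrict (threshold_coloring k 2 1) {1..n}"
    | k where "k \<in> {1..n-1}" "P = fiber_partition {1..n} (threshold_coloring k (1::nat) 2)"
        "c = restrict (threshold_coloring k 1 2) {1..n}"
proof -
  have P: "partition_on {1..n} P" and c_ext: "c \<in> {1..n} \<rightarrow>\<^sub>E {1, 2}"
    using avoidingD[OF \<sigma>] by auto
  then have c: "c \<in> {1..n} \<rightarrow> {1, 2}" and c': "c \<in> {1..n} \<rightarrow> {2, 1}"
    by (auto simp: PiE_iff)
  have "\<not> contains n (P, c) P1a1b" "\<not> contains n (P, c) P1b2a"
    using avoidingD(3)[OF \<sigma>] by blast+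
  then have no_12: "\<not> (same_block P i j \<and> c i = 1 \<and> c j = 2)"
    and no_21: "\<not> (\<not> same_block P i j \<and> c i = 2 \<and> c j = 1)"
    if "i \<in> {1..n}" "j \<in> {1..n}" "i < j" for i j
    unfolding contains.simps using that by blast+
  show ?thesis
  proof (rule partition_on_two_colors_cases[OF P _ c])
    show "{1..n} \<noteq> {}"
      using \<open>n \<ge> 1\<close> by simp
  next
    fix x y assume "x \<in> {1..n}" "y \<in> {1..n}" "c x = c y"
    then show "same_block P x y"
      by (rule same_block_if_same_color[OF \<sigma>, rotated]) simp
  next
    assume one_block: "P = {{1..n}}"
    have "c j \<noteq> 2" if "i \<in> {1..n}" "j \<in> {1..n}" "i < j" "c i = 1" for i j
      using no_12[OF that(1-3)] one_block that by (auto simp: same_block_space)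
    then obtain k where "k \<le> n" and c_eq: "\<And>x. x \<in> {1..n} \<Longrightarrow> c x = threshold_coloring k 2 1 x"
      using ex_threshold_coloring[OF c'] by metis
    then show ?thesis
      using that(1) one_block PiE_eq_restrictI[OF c_ext c_eq] by blast
  next
    fix x y assume xy: "x \<in> {1..n}" "y \<in> {1..n}" "c x \<noteq> c y" "P = fiber_partition {1..n} c"
    have "c j \<noteq> 1" if "i \<in> {1..n}" "j \<in> {1..n}" "i < j" "c i = 2" for i j
      using no_21[OF that(1-3)] xy(4) that by (auto simp: same_block_fiber_partition)
    then obtain k where c_eq: "\<And>x. x \<in> {1..n} \<Longrightarrow> c x = threshold_coloring k 1 2 x"
      using ex_threshold_coloring[OF c] by metis
    have "k \<in> {1..n-1}"
      by (rule threshold_coloring_nonconstant[of "1::nat" 2 x n y]) (use xy(1-3) c_eq in auto)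
    moreover have "P = fiber_partition {1..n} (threshold_coloring k (1::nat) 2)"
      unfolding xy(4) using c_eq by (rule fiber_partition_cong)
    ultimately show ?thesis
      using that(2) PiE_eq_restrictI[OF c_ext c_eq] by blast
  qed
qed

lemma avoiding_P1a1b_P1a2a_P1b2a:
  assumes "n \<ge> 1"
  shows "avoiding n {P1a1b, P1a2a, P1b2a} =
     (\<lambda>k. ({{1..n}}, restrict (threshold_coloring k 2 1) {1..n})) ` {0..n} \<union>
     (\<lambda>k. (fiber_partition {1..n} (threshold_coloring k (1::nat) 2),
           restrict (threshold_coloring k 1 2) {1..n})) ` {1..n-1}"
  (is "_ = ?F ` _ \<union> ?G ` _")
proof
  show "avoiding n {P1a1b, P1a2a, P1b2a} \<subseteq> ?F ` {0..n} \<union> ?G ` {1..n-1}"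
  proof (rule subrelI)
    fix P c assume "(P, c) \<in> avoiding n {P1a1b, P1a2a, P1b2a}"
    then show "(P, c) \<in> ?F ` {0..n} \<union> ?G ` {1..n-1}"
      by (rule avoiding_P1a1b_P1a2a_P1b2aE[OF _ assms]) auto
  qed
  show "?F ` {0..n} \<union> ?G ` {1..n-1} \<subseteq> avoiding n {P1a1b, P1a2a, P1b2a}"
  proof (intro Un_least image_subsetI)
    fix k
    show "?F k \<in> avoiding n {P1a1b, P1a2a, P1b2a}"
      by (intro restrict_in_avoidingI partition_on_space)
        (use assms in \<open>auto simp: same_block_space threshold_coloring_def split: if_splits\<close>)
  next
    fix k
    show "?G k \<in> avoiding n {P1a1b, P1a2a, P1b2a}"
      by (intro restrict_in_avoidingI partition_on_fiber_partition)
        (auto simp: same_block_fiber_partition threshold_coloring_def split: if_splits)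
  qed
qed

lemma card_two_families:
  assumes "n \<ge> 1" "inj_on F {0..n}" "inj_on G {1..n-1}" "F ` {0..n} \<inter> G ` {1..n-1} = {}"
  shows "card (F ` {0..n} \<union> G ` {1..n-1}) = 2 * n"
  using assms by (simp add: card_Un_disjoint card_image)

lemma space_ne_fiber_partition_threshold_coloring:
  assumes "a \<noteq> b" "k \<in> {1..n-1}"
  shows "{{1..n}} \<noteq> fiber_partition {1..n} (threshold_coloring k a b)"
proof
  assume eq: "{{1..n}} = fiber_partition {1..n} (threshold_coloring k a b)"
  have "same_block {{1..n}} 1 n"
    using assms(2) by (auto simp: same_block_space)
  then have "same_block (fiber_partition {1..n} (threshold_coloring k a b)) 1 n"
    by (simp only: eq)
  then show False
    using assms by (auto simp: same_block_fiber_partition threshold_coloring_def split: if_splits)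
qed

lemma card_avoiding_P1a1a_P1a1b_P1b2a:
  assumes "n \<ge> 1"
  shows "card (avoiding n {P1a1a, P1a1b, P1b2a}) = 2 * n"
  unfolding avoiding_P1a1a_P1a1b_P1b2a
  by (rule card_two_families[OF assms inj_on_threshold_coloring inj_on_adjacent_descent_coloring])
    (use threshold_coloring_ne_adjacent_descent_coloring in auto)

lemma card_avoiding_P1a1b_P1a2a_P1a2b:
  assumes "n \<ge> 1"
  shows "card (avoiding n {P1a1b, P1a2a, P1a2b}) = 2 * n"
  unfolding avoiding_P1a1b_P1a2a_P1a2b[OF assms]
  by (rule card_two_families[OF assms inj_on_threshold_coloring inj_on_threshold_coloring])
    (use space_ne_fiber_partition_threshold_coloring[of "2::nat" 1] in auto)

lemma card_avoiding_P1a1b_P1a2a_P1b2a: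
  assumes "n \<ge> 1"
  shows "card (avoiding n {P1a1b, P1a2a, P1b2a}) = 2 * n"
  unfolding avoiding_P1a1b_P1a2a_P1b2a[OF assms]
  by (rule card_two_families[OF assms inj_on_threshold_coloring inj_on_threshold_coloring])
    (use space_ne_fiber_partition_threshold_coloring[of "1::nat" 2] in auto)

theorem mainTheorem12:
  fixes n :: nat
  assumes "n \<ge> 1"
  shows "card (avoiding n {P1a1a, P1a1b, P1b2a}) = 2 * n
    \<and> card (avoiding n {P1a1b, P1a2a, P1a2b}) = 2 * n
    \<and> card (avoiding n {P1a1b, P1a2a, P1b2a}) = 2 * n"
  using card_avoiding_P1a1a_P1a1b_P1b2a[OF assms] card_avoiding_P1a1b_P1a2a_P1a2b[OF assms]
    card_avoiding_P1a1b_P1a2a_P1b2a[OF assms]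
  by blast

end
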